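(* Let $\lambda>0$ be fixed and let $n_1>n_2\ge j-1\ge 1$ be integers with $n_2\ge \lceil \lambda^{-1}\rceil$. Then the regular-graph exponents $\lambda_{n_1,j}(\lambda)$ and $\lambda_{n_2,j}(\lambda)$ (in dimensions $n_1$ and $n_2$, with the same parameter $\lambda$) are well-defined and satisfy $$\lambda_{n_1,j}(\lambda)<\lambda_{n_2,j}(\lambda).$$
   Context: For an integer $n\ge1$ let $f_n(x)=(1+x)^{n+1}/x$ for $x>0$. The function $f_n$ is strictly decreasing on $(0,1/n]$ and strictly increasing on $[1/n,\infty)$. Regular graph exponents (Schmidt–Summerer), defined algebraically. For $\lambda\in[1/n,\infty)$ let $\mu=\mu_n(\lambda)\in(0,1/n]$ be the unique solution of $f_n(\mu)=f_n(\lambda)$, and set $$\lambda_{n,j}(\lambda)=\lambda^{1-\frac{j-1}{n+1}}\,\mu^{\frac{j-1}{n+1}},\qquad 1\le j\le n+2 .$$ Thus $\lambda_{n,1}(\lambda)=\lambda$, $\lambda_{n,n+2}(\lambda)=\mu$, and all ratios $\lambda_{n,j}/\lambda_{n,j+1}$ are equal. For $\lambda=\infty$ put $\lambda_{n,1}=\infty$, $\lambda_{n,2}=1$ and $\lambda_{n,j}=0$ for $3\le j\le n+2$. Further put $\widehat\lambda_{n,j}(\lambda):=\lambda_{n,j+1}(\lambda)$ for $1\le j\le n+1$, and $\widehat\lambda_n(\lambda):=\widehat\lambda_{n,1}(\lambda)=\lambda_{n,2}(\lambda)$. These numbers are the simultaneous-approximation exponents $\lambda_{n,j},\widehat\lambda_{n,j}$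 of any vector inducing the regular graph in dimension $n$ with $\lambda_n=\lambda$. They are well-defined exactly when $\lambda\ge 1/n$. *)

theory Defs
  imports Complex_Main
begin

definition fn :: "nat \<Rightarrow> real \<Rightarrow> real" where
  "fn n x = (1 + x) ^ (n + 1) / x"

text \<open>mu_n(lambda): the unique mu in (0, 1/n] with f_n(mu) = f_n(lambda)
  (meaningful for lambda \<ge> 1/n).\<close>
definition mu_n :: "nat \<Rightarrow> real \<Rightarrow> real" where
  "mu_n n lam = (THE mu. 0 < mu \<and> mu \<le> 1 / real n \<and> fn n mu = fn n lam)"

definition lambda_nj :: "nat \<Rightarrow> nat \<Rightarrow> real \<Rightarrow> real" where
  "lambda_nj n j lam =
     lam powr (1 - (real j - 1) / (real n + 1)) * mu_n n lam powr ((real j - 1) / (real n + 1))"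

end

theory Submission
  imports Defs
begin

text \<open>
  Writing \<open>\<mu> = \<mu>\<^sub>n(\<lambda>)\<close>, the equation \<open>f\<^sub>n(\<mu>) = f\<^sub>n(\<lambda>)\<close> says \<open>\<mu>/\<lambda> = ((1+\<mu>)/(1+\<lambda>))\<^bsup>n+1\<^esup>\<close>,
  so \<open>\<lambda>\<^sub>n\<^sub>,\<^sub>j(\<lambda>) = \<lambda>((1+\<mu>)/(1+\<lambda>))\<^bsup>j-1\<^esup>\<close> is increasing in \<open>\<mu>\<close>. It therefore suffices that
  \<open>\<mu>\<^sub>n(\<lambda>)\<close> strictly decreases in \<open>n\<close>: since \<open>f\<^bsub>n+d\<^esub>(x) = f\<^sub>n(x)(1+x)\<^sup>d\<close>, passing from \<open>n\<close> to
  \<open>n+d\<close> multiplies the level \<open>f\<^sub>n(\<lambda>)\<close> by more than it multiplies \<open>f\<^sub>n(\<mu>\<^sub>n(\<lambda>))\<close>, and the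
  decreasing branch of \<open>f\<^bsub>n+d\<^esub>\<close> must be followed to the left to restore equality.
\<close>

lemma lam_pos_of_inv_le: "n \<ge> 1 \<Longrightarrow> 1 / real n \<le> lam \<Longrightarrow> lam > 0"
  by (rule less_le_trans [of 0 "1 / real n"]) simp_all

lemma has_real_derivative_fn:
  assumes "x > 0"
  shows "(fn n has_real_derivative (1 + x) ^ n * (real n * x - 1) / x\<^sup>2) (at x)"
proof -
  have "((\<lambda>x. (1 + x) ^ (n + 1) / x) has_real_derivative
      (real (n + 1) * (1 + x) ^ n * 1 * x - (1 + x) ^ (n + 1) * 1) / (x * x)) (at x)"
    using assms by (auto intro!: derivative_eq_intros) (cases n; simp add: algebra_simps)
  moreover have "(real (n + 1) * (1 + x) ^ n * 1 * x - (1 + x) ^ (n + 1) * 1) / (x * x)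
      = (1 + x) ^ n * (real n * x - 1) / x\<^sup>2"
    by (simp add: power2_eq_square algebra_simps)
  ultimately show ?thesis
    unfolding fn_def [abs_def] by simp
qed

lemma continuous_on_fn: "0 < a \<Longrightarrow> continuous_on {a..b} (fn n)"
  by (rule continuous_at_imp_continuous_on)
    (meson DERIV_isCont atLeastAtMost_iff has_real_derivative_fn less_le_trans)

lemma fn_pos: "x > 0 \<Longrightarrow> fn n x > 0"
  unfolding fn_def by simp

lemma fn_add_exponent: "fn (n + d) x = fn n x * (1 + x) ^ d"
  unfolding fn_def by (simp add: power_add algebra_simps)

lemma fn_strict_decreasing:
  assumes "0 < x" "x < y" "y \<le> 1 / real n"
  shows "fn n y < fn n x"
proof (rule DERIV_neg_imp_decreasing_open [OF \<open>x < y\<close>])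
  have "n > 0"
    using assms by (cases n) auto
  fix z assume z: "x < z" "z < y"
  with \<open>n > 0\<close> have "real n * z < real n * y"
    by simp
  also have "\<dots> \<le> 1"
    using assms(3) \<open>n > 0\<close> by (simp add: field_simps)
  finally have "real n * z < 1" .
  with z assms show "\<exists>D. (fn n has_real_derivative D) (at z) \<and> D < 0"
    using has_real_derivative_fn [of z n] by (auto intro!: divide_neg_pos mult_pos_neg)
qed (use continuous_on_fn assms in auto)

lemma fn_increasing:
  assumes "n \<ge> 1" "1 / real n \<le> x" "x \<le> y"
  shows "fn n x \<le> fn n y"
proof -
  have "x > 0"
    using lam_pos_of_inv_le assms by blast
  show ?thesis
  proof (rule DERIV_nonneg_imp_increasing_open [OF \<open>x \<le> y\<close>])
    fix z assume z: "x < z" "z < y"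
    have "1 \<le> real n * x"
      using assms by (simp add: field_simps)
    also have "\<dots> \<le> real n * z"
      using z by (intro mult_left_mono) auto
    finally have "real n * z \<ge> 1" .
    with z \<open>x > 0\<close> show "\<exists>D. (fn n has_real_derivative D) (at z) \<and> D \<ge> 0"
      using has_real_derivative_fn [of z n] by auto
  qed (use continuous_on_fn \<open>x > 0\<close> in auto)
qed

lemma ex1_fn_eq_left_branch:
  assumes "n \<ge> 1" "1 / real n \<le> lam"
  shows "\<exists>!mu. 0 < mu \<and> mu \<le> 1 / real n \<and> fn n mu = fn n lam"
proof -
  have "lam > 0"
    using lam_pos_of_inv_le assms by blast
  then have level_pos: "fn n lam > 0"
    by (rule fn_pos)
  \<comment> \<open>\<open>f\<^sub>n(e) \<ge> 1/e \<ge> f\<^sub>n(\<lambda>)\<close> for this \<open>e\<close>, which brackets the level for the IVT.\<close>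
  define e where "e = min (1 / real n) (1 / fn n lam)"
  have "e > 0"
    using assms level_pos by (simp add: e_def)
  have "fn n lam \<le> 1 / e"
    using \<open>e > 0\<close> level_pos by (simp add: e_def field_simps min_def)
  also have "1 / e \<le> fn n e"
    unfolding fn_def using \<open>e > 0\<close> by (intro divide_right_mono one_le_power) auto
  finally have "fn n lam \<le> fn n e" .
  moreover have "fn n (1 / real n) \<le> fn n lam"
    using fn_increasing [OF assms(1) _ assms(2)] by simp
  moreover have "e \<le> 1 / real n"
    by (simp add: e_def)
  ultimately obtain mu where mu: "e \<le> mu" "mu \<le> 1 / real n" "fn n mu = fn n lam"
    using IVT2' continuous_on_fn [OF \<open>e > 0\<close>] by metis
  show ?thesis
  proof (rule ex1I [of _ mu])
    show "0 < mu \<and> mu \<le> 1 / real n \<and> fn n mu = fn n lam"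
      using mu \<open>e > 0\<close> by simp
    fix m assume "0 < m \<and> m \<le> 1 / real n \<and> fn n m = fn n lam"
    with mu \<open>e > 0\<close> show "m = mu"
      using fn_strict_decreasing [of m mu n] fn_strict_decreasing [of mu m n]
      by (metis linorder_neqE_linordered_idom less_le_trans order_less_irrefl)
  qed
qed

lemma
  assumes "n \<ge> 1" "1 / real n \<le> lam"
  shows mu_n_pos: "0 < mu_n n lam"
    and mu_n_le: "mu_n n lam \<le> 1 / real n"
    and fn_mu_n: "fn n (mu_n n lam) = fn n lam"
  using theI' [OF ex1_fn_eq_left_branch [OF assms]] unfolding mu_n_def by auto

lemma mu_n_strict_antimono:
  assumes "n2 \<ge> 1" "n2 < n1" "1 / real n2 \<le> lam"
  shows "mu_n n1 lam < mu_n n2 lam"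
proof -
  have inv_n1_less: "1 / real n1 < 1 / real n2"
    using assms by (simp add: frac_less2)
  have n1: "n1 \<ge> 1" and lam1: "1 / real n1 \<le> lam"
    using assms inv_n1_less by linarith+
  note mu1 = mu_n_pos [OF n1 lam1] mu_n_le [OF n1 lam1] fn_mu_n [OF n1 lam1]
  note mu2 = mu_n_pos [OF assms(1,3)] mu_n_le [OF assms(1,3)] fn_mu_n [OF assms(1,3)]
  let ?m1 = "mu_n n1 lam" and ?m2 = "mu_n n2 lam"
  show ?thesis
  proof (cases "?m2 < lam")
    case True
    obtain d where n1_eq: "n1 = n2 + d" and "d > 0"
      using \<open>n2 < n1\<close> by (metis less_imp_add_positive)
    have "(1 + ?m2) ^ d < (1 + lam) ^ d"
      using True mu2(1) \<open>d > 0\<close> by (intro power_strict_mono) auto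
    then have "fn n1 ?m2 < fn n1 lam"
      unfolding n1_eq fn_add_exponent mu2(3)
      using fn_pos [OF lam_pos_of_inv_le [OF assms(1,3)]] by simp
    then have "fn n1 ?m2 < fn n1 ?m1"
      using assms mu1(3) by simp
    show ?thesis
    proof (rule ccontr)
      assume "\<not> ?m1 < ?m2"
      then consider "?m2 = ?m1" | "?m2 < ?m1"
        by linarith
      then show False
        using \<open>fn n1 ?m2 < fn n1 ?m1\<close> fn_strict_decreasing [OF mu2(1) _ mu1(2)] by cases auto
    qed
  next
    case False
    then have "?m2 = 1 / real n2"
      using mu2(2) assms(3) by linarith
    then show ?thesis
      using mu1(2) inv_n1_less by simp
  qed
qed

lemma lambda_nj_eq:
  assumes "n \<ge> 1" "1 / real n \<le> lam"
  shows "lambda_nj n j lam = lam * ((1 + mu_n n lam) / (1 + lam)) powr (real j - 1)"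
proof -
  let ?mu = "mu_n n lam" and ?t = "(real j - 1) / (real n + 1)"
  have "lam > 0"
    using lam_pos_of_inv_le assms by blast
  have "?mu > 0"
    using mu_n_pos [OF assms] .
  define q where "q = (1 + ?mu) / (1 + lam)"
  have "q > 0"
    using \<open>?mu > 0\<close> \<open>lam > 0\<close> by (simp add: q_def)
  have "(1 + ?mu) ^ (n + 1) * lam = (1 + lam) ^ (n + 1) * ?mu"
    using fn_mu_n [OF assms] \<open>?mu > 0\<close> \<open>lam > 0\<close>
    unfolding fn_def by (simp add: frac_eq_eq)
  then have mu_eq: "?mu = lam * q ^ (n + 1)"
    using \<open>lam > 0\<close> unfolding q_def power_divide
    by (simp add: nonzero_eq_divide_eq mult.commute del: power_Suc)
  have "q ^ (n + 1) = q powr (real n + 1)"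
    using powr_realpow [OF \<open>q > 0\<close>, of "n + 1"] by (simp add: add.commute)
  then have "lambda_nj n j lam = lam powr (1 - ?t) * (lam * q powr (real n + 1)) powr ?t"
    unfolding lambda_nj_def mu_eq by simp
  also have "\<dots> = (lam powr (1 - ?t) * lam powr ?t) * q powr ((real n + 1) * ?t)"
    using \<open>lam > 0\<close> \<open>q > 0\<close> by (simp add: powr_mult powr_powr)
  also have "\<dots> = lam * q powr (real j - 1)"
    using \<open>lam > 0\<close> by (simp add: powr_add [symmetric])
  finally show ?thesis
    unfolding q_def .
qed

theorem proposition2p1:
  fixes lam :: real and n1 n2 j :: nat
  assumes "lam > 0"
    and "n1 > n2" and "n2 \<ge> j - 1" and "j - 1 \<ge> 1"
    and "int n2 \<ge> \<lceil>1 / lam\<rceil>"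
  shows "lam \<ge> 1 / real n1 \<and> lam \<ge> 1 / real n2
     \<and> (\<exists>!mu. 0 < mu \<and> mu \<le> 1 / real n1 \<and> fn n1 mu = fn n1 lam)
     \<and> (\<exists>!mu. 0 < mu \<and> mu \<le> 1 / real n2 \<and> fn n2 mu = fn n2 lam)
     \<and> lambda_nj n1 j lam < lambda_nj n2 j lam"
proof -
  have "n2 \<ge> 1" "n1 \<ge> 1"
    using assms by linarith+
  have "1 / lam \<le> real n2"
    using assms(5) by (metis ceiling_le_iff of_int_of_nat_eq)
  then have lam2: "1 / real n2 \<le> lam"
    using \<open>lam > 0\<close> \<open>n2 \<ge> 1\<close> by (simp add: field_simps)
  moreover have "1 / real n1 < 1 / real n2"
    using \<open>n2 < n1\<close> \<open>n2 \<ge> 1\<close> by (simp add: frac_less2)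
  with lam2 have lam1: "1 / real n1 \<le> lam"
    by linarith
  \<comment> \<open>The hypothesis \<open>n\<^sub>2 \<ge> j - 1\<close> only makes \<open>j\<close> a valid index in dimension \<open>n\<^sub>2\<close>; the
    closed formula for \<open>lambda_nj\<close> does not need it.\<close>
  moreover have "mu_n n1 lam < mu_n n2 lam"
    using mu_n_strict_antimono [OF \<open>n2 \<ge> 1\<close> \<open>n2 < n1\<close> lam2] .
  then have "((1 + mu_n n1 lam) / (1 + lam)) powr (real j - 1)
      < ((1 + mu_n n2 lam) / (1 + lam)) powr (real j - 1)"
    using mu_n_pos [OF \<open>n1 \<ge> 1\<close> lam1] \<open>lam > 0\<close> \<open>j - 1 \<ge> 1\<close>
    by (intro powr_less_mono2 divide_strict_right_mono) auto
  then have "lambda_nj n1 j lam < lambda_nj n2 j lam"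
    unfolding lambda_nj_eq [OF \<open>n1 \<ge> 1\<close> lam1] lambda_nj_eq [OF \<open>n2 \<ge> 1\<close> lam2]
    using \<open>lam > 0\<close> by simp
  ultimately show ?thesis
    using ex1_fn_eq_left_branch \<open>n1 \<ge> 1\<close> \<open>n2 \<ge> 1\<close> by simp
qed

end
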